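(* Let $\mathcal{S}_0$ and $\mathcal{S}_1$ be two MSyDSs with common node set $V$ such that every local function is a threshold function and every master function is \texttt{AND}. Let $\nu$ be the largest negative threshold value occurring among the local functions of $\mathcal{S}_0$ and $\mathcal{S}_1$. Then $\mathcal{S}_0$ and $\mathcal{S}_1$ are inequivalent if and only if there is an inequivalence witness for $\mathcal{S}_0$ and $\mathcal{S}_1$ in which at most $\nu$ nodes have state 0.
   Context: A multilayer synchronous dynamical system (MSyDS) $\mathcal{S}$ over $\mathbb{B}=\{0,1\}$ with $k\ge 1$ layers consists of: a finite node set $V$; undirected simple graphs $G_i=(V,E_i)$, $1\le i\le k$ (all layers share the node set $V$); for each layer $i$ and node $v$ a local function $f_{i,v}$ with output in $\mathbb{B}$ whose inputs are the states of the nodes in the closed neighborhood of $v$ in $G_i$ ($v$ and its neighbors in $G_i$); and for each node $v$ a master function $\psi_v:\mathbb{B}^k\to\mathbb{B}$. A configuration is a map $\mathcal{C}:V\to\mathbb{B}$; its successor is $\mathcal{C}'$ with $\mathcal{C}'(v)=\psi_v(f_{1,v}(\mathcal{C}),\dots,f_{k,v}(\mathcal{C}))$ for all $v$ (synchronous update), where $f_{i,v}(\mathcal{C})$ is $f_{i,v}$ evaluated on the states in $\mathcal{C}$ of the closed neighborhood of $v$ in $G_i$. For an integer $t\ge 0$, the $t$-threshold function equals 1 iff at least $t$ of its inputs equal 1. If the local function of node $v$ in layer $i$ is the $t$-threshold function and $v$ has degree $\delta$ in $G_i$, its negative threshold is $\delta - t + 2$ (the number of 0's among its $\delta+1$ inputs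 that makes it equal 0). \texttt{AND} is 1 iff all inputs are 1. Two MSyDSs on the same node set are equivalent if every configuration has the same successor under both, and inequivalent otherwise. An inequivalence witness is a configuration of $V$ whose successors under the two systems differ. *)

theory Defs
  imports Main
begin

text \<open>A threshold/AND multilayer synchronous dynamical system over node set V is
  represented as a list of layers; each layer is a pair (E, t) consisting of an
  edge relation E of an undirected simple graph on V and a threshold assignment
  t v (the t-threshold local function of node v in that layer).\<close>

type_synonym 'a layer = "('a \<Rightarrow> 'a \<Rightarrow> bool) \<times> ('a \<Rightarrow> nat)"

definition simple_graph_on :: "'a set \<Rightarrow> ('a \<Rightarrow> 'a \<Rightarrow> bool) \<Rightarrow> bool" where
  "simple_graph_on V E \<longleftrightarrow>
     (\<forall>u v. E u v \<longrightarrow> E v u) \<and> (\<forall>v. \<not> E v v) \<and> (\<forall>u v. E u v \<longrightarrow> u \<in> V \<and> v \<in> V)"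

definition thr_msyds :: "'a set \<Rightarrow> 'a layer list \<Rightarrow> bool" where
  "thr_msyds V S \<longleftrightarrow> finite V \<and> S \<noteq> [] \<and> (\<forall>(E, t) \<in> set S. simple_graph_on V E)"

definition closed_nbhd :: "'a set \<Rightarrow> ('a \<Rightarrow> 'a \<Rightarrow> bool) \<Rightarrow> 'a \<Rightarrow> 'a set" where
  "closed_nbhd V E v = {u \<in> V. u = v \<or> E v u}"

definition degree :: "'a set \<Rightarrow> ('a \<Rightarrow> 'a \<Rightarrow> bool) \<Rightarrow> 'a \<Rightarrow> nat" where
  "degree V E v = card {u \<in> V. E v u}"

definition threshold_local :: "'a set \<Rightarrow> 'a layer \<Rightarrow> ('a \<Rightarrow> bool) \<Rightarrow> 'a \<Rightarrow> bool" where
  "threshold_local V L C v = (card {u \<in> closed_nbhd V (fst L) v. C u} \<ge> snd L v)"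

definition successor :: "'a set \<Rightarrow> 'a layer list \<Rightarrow> ('a \<Rightarrow> bool) \<Rightarrow> 'a \<Rightarrow> bool" where
  "successor V S C v = (\<forall>L \<in> set S. threshold_local V L C v)"

text \<open>Configurations are maps V \<Rightarrow> bool; values outside V are irrelevant.\<close>
definition equivalent :: "'a set \<Rightarrow> 'a layer list \<Rightarrow> 'a layer list \<Rightarrow> bool" where
  "equivalent V S0 S1 \<longleftrightarrow> (\<forall>C. \<forall>v \<in> V. successor V S0 C v = successor V S1 C v)"

definition inequivalence_witness :: "'a set \<Rightarrow> 'a layer list \<Rightarrow> 'a layer list \<Rightarrow> ('a \<Rightarrow> bool) \<Rightarrow> bool" where
  "inequivalence_witness V S0 S1 C \<longleftrightarrow> (\<exists>v \<in> V. successor V S0 C v \<noteq> successor V S1 C v)"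

definition neg_threshold :: "'a set \<Rightarrow> 'a layer \<Rightarrow> 'a \<Rightarrow> int" where
  "neg_threshold V L v = int (degree V (fst L) v) - int (snd L v) + 2"

definition max_neg_threshold :: "'a set \<Rightarrow> 'a layer list \<Rightarrow> 'a layer list \<Rightarrow> int" where
  "max_neg_threshold V S0 S1 = Max {neg_threshold V L v | L v. L \<in> set S0 \<union> set S1 \<and> v \<in> V}"

definition num_zeros :: "'a set \<Rightarrow> ('a \<Rightarrow> bool) \<Rightarrow> nat" where
  "num_zeros V C = card {v \<in> V. \<not> C v}"

end

theory Submission
  imports Defs
begin

text \<open>Threshold functions are monotone. Take a configuration C and a node v at which S0
  fires but some layer L of S1 does not, so fewer than t of the \<open>\<delta> + 1\<close> nodes of the
  closed neighbourhood of v are 1, i.e. at least \<open>\<delta> - t + 2\<close> of them are 0. Keep exactly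
  \<open>\<delta> - t + 2\<close> of these zeros and set every other node to 1: the layer L still fails at v,
  while S0 still fires at v by monotonicity. Since S0 fires at v, each of its layers has
  negative threshold at least 1 there, which covers the degenerate case \<open>\<delta> - t + 2 \<le> 0\<close>.\<close>

lemma thr_msyds_simple_graph: "thr_msyds V S \<Longrightarrow> L \<in> set S \<Longrightarrow> simple_graph_on V (fst L)"
  unfolding thr_msyds_def by (cases L) auto

lemma card_closed_nbhd:
  assumes "finite V" "simple_graph_on V E" "v \<in> V"
  shows "card (closed_nbhd V E v) = degree V E v + 1"
proof -
  have "closed_nbhd V E v = insert v {u \<in> V. E v u}"
    using assms unfolding closed_nbhd_def by auto
  moreover have "v \<notin> {u \<in> V. E v u}"
    using assms(2) unfolding simple_graph_on_def by auto
  ultimately show ?thesis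
    using assms(1) unfolding degree_def by simp
qed

lemma finite_closed_nbhd: "finite V \<Longrightarrow> finite (closed_nbhd V E v)"
  unfolding closed_nbhd_def by simp

lemma threshold_local_mono:
  assumes "finite V" "threshold_local V L C v" "\<And>u. C u \<Longrightarrow> C' u"
  shows "threshold_local V L C' v"
proof -
  have "card {u \<in> closed_nbhd V (fst L) v. C u} \<le> card {u \<in> closed_nbhd V (fst L) v. C' u}"
    using assms by (intro card_mono) (auto simp: finite_closed_nbhd)
  with assms(2) show ?thesis
    unfolding threshold_local_def by simp
qed

lemma successor_mono:
  assumes "finite V" "successor V S C v" "\<And>u. C u \<Longrightarrow> C' u"
  shows "successor V S C' v"
  using assms(2) threshold_local_mono[where C = C and C' = C', OF assms(1) _ assms(3)]
  unfolding successor_def by blast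

lemma threshold_local_imp_neg_threshold_pos:
  assumes "finite V" "simple_graph_on V (fst L)" "v \<in> V" "threshold_local V L C v"
  shows "neg_threshold V L v \<ge> 1"
proof -
  have "snd L v \<le> card {u \<in> closed_nbhd V (fst L) v. C u}"
    using assms(4) unfolding threshold_local_def .
  also have "\<dots> \<le> card (closed_nbhd V (fst L) v)"
    using assms(1) by (intro card_mono) (auto simp: finite_closed_nbhd)
  finally show ?thesis
    using card_closed_nbhd[OF assms(1-3)] unfolding neg_threshold_def by linarith
qed

lemma successor_imp_neg_threshold_pos:
  assumes "thr_msyds V S" "v \<in> V" "successor V S C v"
  obtains L where "L \<in> set S" and "neg_threshold V L v \<ge> 1"
proof -
  obtain L where L: "L \<in> set S"
    using assms(1) unfolding thr_msyds_def by (cases S) auto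
  have "finite V"
    using assms(1) unfolding thr_msyds_def by simp
  moreover have "simple_graph_on V (fst L)"
    using assms(1) L by (rule thr_msyds_simple_graph)
  moreover have "threshold_local V L C v"
    using assms(3) L unfolding successor_def by blast
  ultimately have "neg_threshold V L v \<ge> 1"
    by (rule threshold_local_imp_neg_threshold_pos[OF _ _ assms(2)])
  with L show ?thesis by (rule that)
qed

lemma not_threshold_local_few_zeros:
  assumes fin: "finite V" and graph: "simple_graph_on V (fst L)" and "v \<in> V"
    and fails: "\<not> threshold_local V L C v"
  obtains Z where "Z \<subseteq> {u \<in> closed_nbhd V (fst L) v. \<not> C u}"
    and "card Z = nat (neg_threshold V L v)"
    and "\<not> threshold_local V L (\<lambda>u. u \<notin> Z) v"
proof -
  define N where "N = closed_nbhd V (fst L) v"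
  have "finite N" unfolding N_def using fin by (rule finite_closed_nbhd)
  have card_N: "card N = degree V (fst L) v + 1"
    unfolding N_def using card_closed_nbhd[OF fin graph \<open>v \<in> V\<close>] .
  have ones: "card {u \<in> N. C u} < snd L v"
    using fails unfolding threshold_local_def N_def by simp
  have "card N = card ({u \<in> N. C u} \<union> {u \<in> N. \<not> C u})"
    by (rule arg_cong[where f = card]) auto
  also have "\<dots> = card {u \<in> N. C u} + card {u \<in> N. \<not> C u}"
    using \<open>finite N\<close> by (intro card_Un_disjoint) auto
  finally have "card {u \<in> N. C u} + card {u \<in> N. \<not> C u} = card N" by simp
  with ones card_N have "nat (neg_threshold V L v) \<le> card {u \<in> N. \<not> C u}"
    unfolding neg_threshold_def by linarith
  then obtain Z where Z: "Z \<subseteq> {u \<in> N. \<not> C u}" and card_Z: "card Z = nat (neg_threshold V L v)"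
    by (metis obtain_subset_with_card_n)
  have "Z \<subseteq> N" using Z by auto
  have "{u \<in> N. u \<notin> Z} = N - Z" by auto
  then have "card {u \<in> N. u \<notin> Z} = card N - card Z"
    using \<open>Z \<subseteq> N\<close> \<open>finite N\<close> by (simp add: card_Diff_subset finite_subset)
  moreover have "card Z \<le> card N"
    using \<open>Z \<subseteq> N\<close> \<open>finite N\<close> by (rule card_mono[rotated])
  ultimately have "card {u \<in> N. u \<notin> Z} < snd L v"
    using ones card_N card_Z unfolding neg_threshold_def by linarith
  then have "\<not> threshold_local V L (\<lambda>u. u \<notin> Z) v"
    unfolding threshold_local_def N_def by simp
  with Z card_Z show ?thesis
    using that unfolding N_def by blast
qed

lemma num_zeros_complement:
  assumes "Z \<subseteq> V"
  shows "num_zeros V (\<lambda>u. u \<notin> Z) = card Z"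
proof -
  have "{v \<in> V. \<not> v \<notin> Z} = Z"
    using assms by auto
  then show ?thesis
    unfolding num_zeros_def by simp
qed

lemma neg_threshold_le_max_neg_threshold:
  assumes "finite V" "L \<in> set S0 \<union> set S1" "v \<in> V"
  shows "neg_threshold V L v \<le> max_neg_threshold V S0 S1"
proof -
  let ?values = "{neg_threshold V L v | L v. L \<in> set S0 \<union> set S1 \<and> v \<in> V}"
  have "?values = (\<lambda>(L, v). neg_threshold V L v) ` ((set S0 \<union> set S1) \<times> V)"
    by auto
  then have "finite ?values"
    using assms(1) by simp
  then show ?thesis
    unfolding max_neg_threshold_def by (rule Max_ge) (use assms(2,3) in blast)
qed

lemma inequivalence_witness_swap:
  "inequivalence_witness V S1 S0 C = inequivalence_witness V S0 S1 C"
  unfolding inequivalence_witness_def by auto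

lemma max_neg_threshold_swap:
  "max_neg_threshold V S1 S0 = max_neg_threshold V S0 S1"
  unfolding max_neg_threshold_def by (metis Un_commute)

lemma small_inequivalence_witness:
  assumes A: "thr_msyds V A" and B: "thr_msyds V B" and "v \<in> V"
    and fires: "successor V A C v" and fails: "\<not> successor V B C v"
  obtains C' where "inequivalence_witness V A B C'"
    and "int (num_zeros V C') \<le> max_neg_threshold V A B"
proof -
  have fin: "finite V" using A unfolding thr_msyds_def by simp
  obtain L where L: "L \<in> set B" and "\<not> threshold_local V L C v"
    using fails unfolding successor_def by blast
  moreover have "simple_graph_on V (fst L)"
    using B L by (rule thr_msyds_simple_graph)
  ultimately obtain Z where Z: "Z \<subseteq> {u \<in> closed_nbhd V (fst L) v. \<not> C u}"
    and card_Z: "card Z = nat (neg_threshold V L v)"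
    and still_fails: "\<not> threshold_local V L (\<lambda>u. u \<notin> Z) v"
    using not_threshold_local_few_zeros[OF fin _ \<open>v \<in> V\<close>] by blast
  define C' where "C' = (\<lambda>u. u \<notin> Z)"
  have "C u \<Longrightarrow> C' u" for u
    using Z unfolding C'_def by blast
  then have "successor V A C' v"
    by (rule successor_mono[OF fin fires])
  moreover have "\<not> successor V B C' v"
    using L still_fails unfolding successor_def C'_def by blast
  ultimately have "inequivalence_witness V A B C'"
    using \<open>v \<in> V\<close> unfolding inequivalence_witness_def by blast
  have "Z \<subseteq> V"
    using Z unfolding closed_nbhd_def by auto
  then have "num_zeros V C' = nat (neg_threshold V L v)"
    unfolding C'_def using card_Z by (simp add: num_zeros_complement)
  moreover have "neg_threshold V L v \<le> max_neg_threshold V A B"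
    using fin L \<open>v \<in> V\<close> by (intro neg_threshold_le_max_neg_threshold) auto
  moreover obtain L0 where "L0 \<in> set A" and "neg_threshold V L0 v \<ge> 1"
    using successor_imp_neg_threshold_pos[OF A \<open>v \<in> V\<close> fires] .
  then have "1 \<le> max_neg_threshold V A B"
    using fin \<open>v \<in> V\<close> neg_threshold_le_max_neg_threshold[of V L0 A B v] by simp
  ultimately have "int (num_zeros V C') \<le> max_neg_threshold V A B"
    by linarith
  with \<open>inequivalence_witness V A B C'\<close> show ?thesis by (rule that)
qed

theorem lemma5p3:
  fixes V :: "'a set" and S0 S1 :: "'a layer list"
  assumes "thr_msyds V S0" and "thr_msyds V S1"
  shows "\<not> equivalent V S0 S1 \<longleftrightarrow>
    (\<exists>C. inequivalence_witness V S0 S1 C \<and>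
         int (num_zeros V C) \<le> max_neg_threshold V S0 S1)"
proof
  assume "\<not> equivalent V S0 S1"
  then obtain C v where "v \<in> V" and "successor V S0 C v \<noteq> successor V S1 C v"
    unfolding equivalent_def by blast
  then consider "successor V S0 C v" "\<not> successor V S1 C v"
    | "successor V S1 C v" "\<not> successor V S0 C v"
    by blast
  then show "\<exists>C. inequivalence_witness V S0 S1 C \<and>
      int (num_zeros V C) \<le> max_neg_threshold V S0 S1"
  proof cases
    case 1
    then show ?thesis
      using small_inequivalence_witness[OF assms \<open>v \<in> V\<close>] by metis
  next
    case 2
    then show ?thesis
      using small_inequivalence_witness[OF assms(2,1) \<open>v \<in> V\<close>]
      by (metis inequivalence_witness_swap max_neg_threshold_swap)
  qed
next
  assume "\<exists>C. inequivalence_witness V S0 S1 C \<and> int (num_zeros V C) \<le> max_neg_threshold V S0 S1"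
  then show "\<not> equivalent V S0 S1"
    unfolding equivalent_def inequivalence_witness_def by blast
qed

end
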